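(* Let $G=(V,E)$ be an undirected unweighted graph on $n$ nodes and let $H$ be the subgraph produced by the construction described in the context. For any two nodes $s,t\in V$ that are uncovered in $H$ and such that the canonical shortest path $\pi_G(s,t)$ has more than $\mu^3/n$ heavy nodes, we have $\texttt{dist}_H(s,t)\le\texttt{dist}_G(s,t)+4$ with probability at least $1-\frac{1}{n^3}$.
   Context: Let $\mu=\lceil n^{2/5}\log^{1/5}n\rceil$. A node is heavy if its degree in $G$ is at least $\mu$, and light otherwise; an edge is heavy if at least one endpoint is heavy. $\Gamma_G(v)$ denotes the set consisting of $v$ and its neighbors; for nodes $u,v$, $\pi_G(u,v)$ is a fixed (canonical) shortest $u\leadsto v$ path, $|P|$ is the number of edges of a path $P$, and $\circ$ is path concatenation. A node is uncovered in $H$ if not all of its incident edges in $G$ belong to $H$. Weak CSSSP: given $G$, gray edges $E_g\subseteq E$, source $s$, positive integer $g$, an $s\leadsto t$ path is $g$-short if it has fewer than $g$ gray edges and has the form $(s,s')\circ\pi_G(s',t')\circ(t',t)$ with $\pi_G(s',t')$ a shortest path and $(s,s'),(t',t)$ edges (or empty when $s'=s$, resp. $t'=t$). A solution outputs, for every $t$, an $s\leadsto t$ path $P(s,t)$ such that whenever an $s\leadsto t$ $g$-short path exists, $P(s,t)$ has at most $5g$ gray edges and $|P(s,t)|\le|P_g(s,t)|$ for every $s\leadsto t$ path $P_g(s,t)$ with fewer than $g$ gray edges (otherwise $P(s,t)$ is arbitrary). Construction of $H=(V,E')$: (1) $E'$ := all edges incident to light nodes. (2) Sample a set $S_1$ by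 including each node independently with probability $9\mu/n$; for each $x\in S_1$ add to $E'$ the edges of a BFS tree rooted at $x$ spanning $V$. (3) Sample a set $S_2$ by including each node independently with probability $1/\mu$; for each heavy node $x$ with $(\{x\}\cup\Gamma_G(x))\cap S_2=\varnothing$, add all edges incident to $x$ to $E'$. (4) For each heavy node $v\notin S_2$ with $\Gamma_G(v)\cap S_2\neq\varnothing$, choose arbitrarily one $x\in\Gamma_G(v)\cap S_2$ and add $(x,v)$ to $E'$. (5) For each $x_1\in S_2$, solve weak CSSSP on $G$ with source $x_1$, gray edges the heavy edges, and $g=\mu^3/n+2$, obtaining paths $P(x_1,x_2)$ for all $x_2\in V$; add the edges of $P(x_1,x_2)$ to $E'$ for every $x_2\in S_2$. The probability is over the random samples $S_1,S_2$. *)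

theory Defs
  imports "HOL-Probability.Probability"
begin

definition walk :: "'a set \<Rightarrow> 'a set set \<Rightarrow> 'a list \<Rightarrow> bool" where
  "walk V E p \<longleftrightarrow> p \<noteq> [] \<and> set p \<subseteq> V \<and> (\<forall>i < length p - 1. {p ! i, p ! Suc i} \<in> E)"

definition is_path :: "'a set \<Rightarrow> 'a set set \<Rightarrow> 'a \<Rightarrow> 'a \<Rightarrow> 'a list \<Rightarrow> bool" where
  "is_path V E u v p \<longleftrightarrow> walk V E p \<and> distinct p \<and> hd p = u \<and> last p = v"

definition plen :: "'a list \<Rightarrow> nat" where
  "plen p = length p - 1"

definition edge_list :: "'a list \<Rightarrow> 'a set list" where
  "edge_list p = map (\<lambda>i. {p ! i, p ! Suc i}) [0..<length p - 1]"

definition edges_of :: "'a list \<Rightarrow> 'a set set" where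
  "edges_of p = set (edge_list p)"

definition dist :: "'a set \<Rightarrow> 'a set set \<Rightarrow> 'a \<Rightarrow> 'a \<Rightarrow> enat" where
  "dist V E u v = (INF p \<in> {p. walk V E p \<and> hd p = u \<and> last p = v}. enat (plen p))"

definition simple_graph :: "'a set \<Rightarrow> 'a set set \<Rightarrow> bool" where
  "simple_graph V E \<longleftrightarrow> finite V \<and> (\<forall>e\<in>E. e \<subseteq> V \<and> card e = 2)"

definition connected_graph :: "'a set \<Rightarrow> 'a set set \<Rightarrow> bool" where
  "connected_graph V E \<longleftrightarrow> (\<forall>u\<in>V. \<forall>v\<in>V. dist V E u v < \<infinity>)"

definition degree :: "'a set set \<Rightarrow> 'a \<Rightarrow> nat" where
  "degree E v = card {e \<in> E. v \<in> e}"

definition Gamma :: "'a set set \<Rightarrow> 'a \<Rightarrow> 'a set" where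
  "Gamma E v = insert v {u. {u, v} \<in> E}"

definition mu :: "nat \<Rightarrow> nat" where
  "mu n = nat \<lceil>real n powr (2/5) * ln (real n) powr (1/5)\<rceil>"

definition heavy :: "'a set \<Rightarrow> 'a set set \<Rightarrow> 'a \<Rightarrow> bool" where
  "heavy V E v \<longleftrightarrow> degree E v \<ge> mu (card V)"

definition heavy_edge :: "'a set \<Rightarrow> 'a set set \<Rightarrow> 'a set \<Rightarrow> bool" where
  "heavy_edge V E e \<longleftrightarrow> (\<exists>v\<in>e. heavy V E v)"

definition canonical_sp :: "'a set \<Rightarrow> 'a set set \<Rightarrow> ('a \<Rightarrow> 'a \<Rightarrow> 'a list) \<Rightarrow> bool" where
  "canonical_sp V E \<pi> \<longleftrightarrow> (\<forall>u\<in>V. \<forall>v\<in>V. is_path V E u v (\<pi> u v) \<and> enat (plen (\<pi> u v)) = dist V E u v)"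

definition gray_count :: "'a set set \<Rightarrow> 'a list \<Rightarrow> nat" where
  "gray_count Eg p = length (filter (\<lambda>e. e \<in> Eg) (edge_list p))"

definition g_short :: "'a set \<Rightarrow> 'a set set \<Rightarrow> ('a \<Rightarrow> 'a \<Rightarrow> 'a list) \<Rightarrow> 'a set set \<Rightarrow> real
                      \<Rightarrow> 'a \<Rightarrow> 'a \<Rightarrow> 'a list \<Rightarrow> bool" where
  "g_short V E \<pi> Eg g s t p \<longleftrightarrow> is_path V E s t p \<and> real (gray_count Eg p) < g \<and>
     (\<exists>s' t'. (s' = s \<or> {s, s'} \<in> E) \<and> (t' = t \<or> {t', t} \<in> E) \<and> s' \<in> V \<and> t' \<in> V \<and>
        p = (if s' = s then [] else [s]) @ \<pi> s' t' @ (if t' = t then [] else [t]))"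

definition weak_csssp :: "'a set \<Rightarrow> 'a set set \<Rightarrow> ('a \<Rightarrow> 'a \<Rightarrow> 'a list) \<Rightarrow> 'a set set \<Rightarrow> real
                          \<Rightarrow> 'a \<Rightarrow> ('a \<Rightarrow> 'a list) \<Rightarrow> bool" where
  "weak_csssp V E \<pi> Eg g s P \<longleftrightarrow> (\<forall>t\<in>V. is_path V E s t (P t) \<and>
     ((\<exists>q. g_short V E \<pi> Eg g s t q) \<longrightarrow>
        real (gray_count Eg (P t)) \<le> 5 * g \<and>
        (\<forall>q. is_path V E s t q \<and> real (gray_count Eg q) < g \<longrightarrow> plen (P t) \<le> plen q)))"

definition spanning_tree :: "'a set \<Rightarrow> 'a set set \<Rightarrow> 'a set set \<Rightarrow> bool" where
  "spanning_tree V E T \<longleftrightarrow> T \<subseteq> E \<and> connected_graph V T \<and> card T = card V - 1"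

definition bfs_tree :: "'a set \<Rightarrow> 'a set set \<Rightarrow> 'a \<Rightarrow> 'a set set \<Rightarrow> bool" where
  "bfs_tree V E x T \<longleftrightarrow> spanning_tree V E T \<and> (\<forall>v\<in>V. dist V T x v = dist V E x v)"

(* E' is an edge set obtainable by the construction (1)-(5) for samples S1, S2,
   for some admissible choice of BFS trees, step-(4) neighbours and CSSSP solutions *)
definition construction :: "'a set \<Rightarrow> 'a set set \<Rightarrow> ('a \<Rightarrow> 'a \<Rightarrow> 'a list) \<Rightarrow> 'a set \<Rightarrow> 'a set
                            \<Rightarrow> 'a set set \<Rightarrow> bool" where
  "construction V E \<pi> S1 S2 E' \<longleftrightarrow>
    (\<exists>T c P.
       (\<forall>x\<in>S1. bfs_tree V E x (T x)) \<and>
       (\<forall>v\<in>V. heavy V E v \<and> v \<notin> S2 \<and> Gamma E v \<inter> S2 \<noteq> {} \<longrightarrow> c v \<in> Gamma E v \<inter> S2) \<and>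
       (\<forall>x1\<in>S2. weak_csssp V E \<pi> {e\<in>E. heavy_edge V E e}
                   (real (mu (card V)) ^ 3 / real (card V) + 2) x1 (P x1)) \<and>
       E' = {e\<in>E. \<exists>v\<in>e. \<not> heavy V E v}
          \<union> (\<Union>x\<in>S1. T x)
          \<union> {e\<in>E. \<exists>x\<in>e. heavy V E x \<and> (insert x (Gamma E x)) \<inter> S2 = {}}
          \<union> {{c v, v} | v. v \<in> V \<and> heavy V E v \<and> v \<notin> S2 \<and> Gamma E v \<inter> S2 \<noteq> {}}
          \<union> (\<Union>x1\<in>S2. \<Union>x2\<in>S2. edges_of (P x1 x2)))"

definition uncovered :: "'a set set \<Rightarrow> 'a set set \<Rightarrow> 'a \<Rightarrow> bool" where
  "uncovered E E' v \<longleftrightarrow> (\<exists>e\<in>E. v \<in> e \<and> e \<notin> E')"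

definition sample_set :: "'a set \<Rightarrow> real \<Rightarrow> 'a set pmf" where
  "sample_set V p = map_pmf (\<lambda>f. {x \<in> V. f x})
      (Pi_pmf V False (\<lambda>_. bernoulli_pmf (min 1 (max 0 p))))"

definition samples :: "'a set \<Rightarrow> ('a set \<times> 'a set) pmf" where
  "samples V = pair_pmf (sample_set V (9 * real (mu (card V)) / real (card V)))
                        (sample_set V (1 / real (mu (card V))))"

end

theory Submission
  imports Defs
begin

text \<open>
  Every heavy node of \<open>\<pi>(s,t)\<close> has at least \<open>\<mu>\<close> neighbours, while no node is adjacent to
  more than three nodes of a shortest path, as it would otherwise shortcut it. So the more than
  \<open>\<mu>\<^sup>3/n\<close> heavy nodes of \<open>\<pi>(s,t)\<close> have more than \<open>\<mu>\<^sup>4/(3n)\<close> distinct neighbours, and the first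
  sample \<open>S\<^sub>1\<close> misses all of them with probability at most
  \<open>(1 - 9\<mu>/n)^(\<mu>\<^sup>4/(3n)) \<le> exp(-3\<mu>\<^sup>5/n\<^sup>2) \<le> n^-3\<close>. If some \<open>x \<in> S\<^sub>1\<close> is adjacent to
  \<open>\<pi>(s,t)\<close>, the BFS tree of \<open>x\<close> lies in \<open>H\<close> and gives
  \<open>dist\<^sub>H(s,t) \<le> d(x,s) + d(x,t) \<le> dist\<^sub>G(s,t) + 2\<close>.
\<close>

lemma walk_single [simp]: "walk V E [a] \<longleftrightarrow> a \<in> V"
  by (simp add: walk_def)

lemma walk_Cons_Cons [simp]:
  "walk V E (a # b # p) \<longleftrightarrow> a \<in> V \<and> {a, b} \<in> E \<and> walk V E (b # p)"
proof
  assume h: "walk V E (a # b # p)"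
  have "{(b # p) ! i, (b # p) ! Suc i} \<in> E" if "i < length (b # p) - 1" for i
    using h that unfolding walk_def by (metis Suc_less_eq length_Cons diff_Suc_1 nth_Cons_Suc)
  moreover have "{a, b} \<in> E" using h unfolding walk_def by fastforce
  ultimately show "a \<in> V \<and> {a, b} \<in> E \<and> walk V E (b # p)" using h unfolding walk_def by auto
next
  assume h: "a \<in> V \<and> {a, b} \<in> E \<and> walk V E (b # p)"
  have "{(a # b # p) ! i, (a # b # p) ! Suc i} \<in> E" if i: "i < length (a # b # p) - 1" for i
    using h i unfolding walk_def by (cases i) auto
  then show "walk V E (a # b # p)" using h unfolding walk_def by auto
qed

lemma walk_append:
  assumes "walk V E p" "walk V E q" "{last p, hd q} \<in> E"
  shows "walk V E (p @ q)"
  using assms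
proof (induction p rule: induct_list012)
  case 1 then show ?case by (simp add: walk_def)
next
  case (2 x) then show ?case by (cases q) auto
next
  case (3 x y zs) then show ?case by auto
qed

lemma walk_rev: "walk V E p \<Longrightarrow> walk V E (rev p)"
proof (induction p rule: induct_list012)
  case 1 then show ?case by (simp add: walk_def)
next
  case (2 x) then show ?case by simp
next
  case (3 x y zs)
  have "walk V E (rev (y # zs) @ [x])"
    by (rule walk_append) (use 3 in \<open>auto simp: insert_commute\<close>)
  then show ?case by simp
qed

lemma walk_mono: "walk V E p \<Longrightarrow> E \<subseteq> E' \<Longrightarrow> walk V E' p"
  unfolding walk_def by blast

lemma walk_join:
  assumes "walk V E p" "walk V E q" "last p = hd q"
  shows "walk V E (p @ tl q)" "hd (p @ tl q) = hd p" "last (p @ tl q) = last q"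
    and "plen (p @ tl q) = plen p + plen q"
proof -
  have "p \<noteq> []" "q \<noteq> []" using assms unfolding walk_def by auto
  then show "hd (p @ tl q) = hd p" by simp
  show "last (p @ tl q) = last q" "plen (p @ tl q) = plen p + plen q"
    using \<open>p \<noteq> []\<close> \<open>q \<noteq> []\<close> assms(3) unfolding plen_def
    by (cases q rule: list.exhaust; cases "tl q"; simp)+
  show "walk V E (p @ tl q)"
  proof (cases "tl q")
    case Nil then show ?thesis using assms(1) by simp
  next
    case (Cons a r)
    then have "q = hd q # a # r" using \<open>q \<noteq> []\<close> by (cases q) auto
    then have "{hd q, a} \<in> E" "walk V E (a # r)" using assms(2) by (metis walk_Cons_Cons)+
    then show ?thesis using assms(1,3) Cons by (intro walk_append) auto
  qed
qed

lemma dist_le_plen: "walk V E p \<Longrightarrow> dist V E (hd p) (last p) \<le> enat (plen p)"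
  unfolding dist_def by (rule INF_lower) auto

lemma dist_attained:
  assumes "dist V E u v \<noteq> \<infinity>"
  obtains p where "walk V E p" "hd p = u" "last p = v" "enat (plen p) = dist V E u v"
proof -
  let ?S = "{p. walk V E p \<and> hd p = u \<and> last p = v}"
  have "?S \<noteq> {}"
  proof
    assume "?S = {}"
    then have "dist V E u v = \<infinity>" unfolding dist_def by (simp only: INF_empty) (simp add: top_enat_def)
    then show False using assms by simp
  qed
  then have "Inf ((\<lambda>p. enat (plen p)) ` ?S) \<in> (\<lambda>p. enat (plen p)) ` ?S"
    unfolding Inf_enat_def by (auto intro: LeastI)
  then show ?thesis using that unfolding dist_def by auto
qed

lemma dist_triangle: "dist V E u w \<le> dist V E u v + dist V E v w"
proof (cases "dist V E u v = \<infinity> \<or> dist V E v w = \<infinity>")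
  case False
  then obtain p q where p: "walk V E p" "hd p = u" "last p = v" "enat (plen p) = dist V E u v"
    and q: "walk V E q" "hd q = v" "last q = w" "enat (plen q) = dist V E v w"
    by (metis dist_attained)
  have "dist V E u w \<le> enat (plen (p @ tl q))"
    using dist_le_plen walk_join(1-3) p q by metis
  also have "\<dots> = dist V E u v + dist V E v w"
    using walk_join(4)[OF p(1) q(1)] p q by (simp flip: plus_enat_simps(1))
  finally show ?thesis .
qed auto

lemma dist_commute: "dist V E u v = dist V E v u"
proof -
  have "dist V E u v \<le> dist V E v u" for u v
  proof (cases "dist V E v u = \<infinity>")
    case False
    then obtain p where p: "walk V E p" "hd p = v" "last p = u" "enat (plen p) = dist V E v u"
      by (metis dist_attained)
    then have "p \<noteq> []" unfolding walk_def by simp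
    then have "dist V E u v \<le> enat (plen (rev p))"
      using dist_le_plen[OF walk_rev[OF p(1)]] p by (simp add: hd_rev last_rev)
    then show ?thesis using p by (simp add: plen_def)
  qed simp
  then show ?thesis by (metis order_antisym)
qed

lemma dist_antimono: "E \<subseteq> E' \<Longrightarrow> dist V E' u v \<le> dist V E u v"
  unfolding dist_def by (rule INF_superset_mono) (auto intro: walk_mono)

lemma dist_le_1_if_edge: "{u, v} \<in> E \<Longrightarrow> u \<in> V \<Longrightarrow> v \<in> V \<Longrightarrow> dist V E u v \<le> 1"
  using dist_le_plen[of V E "[u, v]"] by (simp add: plen_def one_enat_def)

lemma dist_hd_nth_le:
  assumes "walk V E p" "i < length p"
  shows "dist V E (hd p) (p ! i) \<le> enat i"
proof -
  have "walk V E (take (Suc i) p)"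
    using assms unfolding walk_def by (auto dest: in_set_takeD)
  moreover have "hd (take (Suc i) p) = hd p" by (simp add: hd_take)
  moreover have "last (take (Suc i) p) = p ! i" using assms(2) by (simp add: take_Suc_conv_app_nth)
  ultimately show ?thesis
    using dist_le_plen[of V E "take (Suc i) p"] assms by (simp add: plen_def)
qed

lemma dist_nth_last_le:
  assumes "walk V E p" "i < length p"
  shows "dist V E (p ! i) (last p) \<le> enat (plen p - i)"
proof -
  have "walk V E (drop i p)"
    using assms unfolding walk_def by (auto dest: in_set_dropD simp: add.commute)
  then show ?thesis
    using dist_le_plen[of V E "drop i p"] assms by (simp add: hd_drop_conv_nth plen_def)
qed

definition shortest_walk :: "'a set \<Rightarrow> 'a set set \<Rightarrow> 'a list \<Rightarrow> bool" where
  "shortest_walk V E p \<longleftrightarrow> walk V E p \<and> enat (plen p) = dist V E (hd p) (last p)"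

lemma canonical_sp_shortest_walk:
  assumes "canonical_sp V E \<pi>" "s \<in> V" "t \<in> V"
  shows "shortest_walk V E (\<pi> s t)" "hd (\<pi> s t) = s" "last (\<pi> s t) = t"
  using assms unfolding canonical_sp_def is_path_def shortest_walk_def by auto

lemma shortest_walk_common_neighbour:
  assumes p: "shortest_walk V E p" and ij: "i < length p" "j < length p"
    and x: "x \<in> V" "{x, p ! i} \<in> E" "{x, p ! j} \<in> E"
  shows "j \<le> i + 2"
proof -
  have w: "walk V E p" and len: "enat (plen p) = dist V E (hd p) (last p)"
    using p unfolding shortest_walk_def by auto
  have inV: "p ! i \<in> V" "p ! j \<in> V" using w ij unfolding walk_def by auto
  have "enat (plen p) \<le> dist V E (hd p) (p ! i) + dist V E (p ! i) x + dist V E x (p ! j)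
                          + dist V E (p ! j) (last p)"
    unfolding len by (meson dist_triangle add_mono order_trans order_refl)
  also have "\<dots> \<le> enat i + 1 + 1 + enat (plen p - j)"
    using x inV by (intro add_mono dist_hd_nth_le dist_nth_last_le w ij dist_le_1_if_edge)
      (auto simp: insert_commute)
  also have "\<dots> = enat (i + 2 + (plen p - j))" by (simp add: one_enat_def)
  finally show ?thesis using ij unfolding plen_def by simp
qed

lemma shortest_walk_detour_le:
  assumes p: "shortest_walk V E p" and i: "i < length p" and x: "x \<in> V" "{x, p ! i} \<in> E"
  shows "dist V E x (hd p) + dist V E x (last p) \<le> dist V E (hd p) (last p) + 2"
proof -
  have w: "walk V E p" and len: "enat (plen p) = dist V E (hd p) (last p)"
    using p unfolding shortest_walk_def by auto
  have xi: "dist V E x (p ! i) \<le> 1"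
    using x w i by (intro dist_le_1_if_edge) (auto simp: walk_def)
  have "dist V E x (hd p) + dist V E x (last p)
        \<le> (dist V E x (p ! i) + dist V E (p ! i) (hd p)) + (dist V E x (p ! i) + dist V E (p ! i) (last p))"
    by (intro add_mono dist_triangle)
  also have "\<dots> \<le> (1 + enat i) + (1 + enat (plen p - i))"
    using xi dist_hd_nth_le[OF w i] dist_nth_last_le[OF w i]
    by (intro add_mono) (auto simp: dist_commute[of V E "p ! i"])
  also have "\<dots> = enat (plen p) + 2"
    using i by (simp add: plen_def one_enat_def numeral_eq_enat)
  finally show ?thesis unfolding len .
qed

lemma shortest_walk_card_neighbours_le_3:
  assumes p: "shortest_walk V E p" and x: "x \<in> V"
  shows "card {w \<in> set p. {x, w} \<in> E} \<le> 3"
proof (cases "\<exists>i<length p. {x, p ! i} \<in> E")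
  case True
  define a where "a = (LEAST i. i < length p \<and> {x, p ! i} \<in> E)"
  have a: "a < length p" "{x, p ! a} \<in> E" using LeastI_ex[OF True] unfolding a_def by auto
  have "{w \<in> set p. {x, w} \<in> E} \<subseteq> (\<lambda>i. p ! i) ` {a..a + 2}"
  proof
    fix w assume "w \<in> {w \<in> set p. {x, w} \<in> E}"
    then obtain j where j: "j < length p" "w = p ! j" "{x, p ! j} \<in> E" by (auto simp: in_set_conv_nth)
    have "a \<le> j" using j unfolding a_def by (simp add: Least_le)
    moreover have "j \<le> a + 2" using shortest_walk_common_neighbour[OF p a(1) j(1) x a(2) j(3)] .
    ultimately show "w \<in> (\<lambda>i. p ! i) ` {a..a + 2}" using j by auto
  qed
  then have "card {w \<in> set p. {x, w} \<in> E} \<le> card ((\<lambda>i. p ! i) ` {a..a + 2})"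
    by (intro card_mono) auto
  also have "\<dots> \<le> 3" using card_image_le[of "{a..a + 2}" "\<lambda>i. p ! i"] by simp
  finally show ?thesis .
next
  case False
  then have "{w \<in> set p. {x, w} \<in> E} = {}" by (auto simp: in_set_conv_nth)
  then show ?thesis by (simp only: card.empty)
qed

lemma simple_graph_edge_in_V: "simple_graph V E \<Longrightarrow> {x, y} \<in> E \<Longrightarrow> x \<in> V \<and> y \<in> V"
  unfolding simple_graph_def by auto

lemma simple_graph_card_neighbours:
  assumes G: "simple_graph V E"
  shows "card {u. {u, w} \<in> E} = degree E w"
proof -
  have inj: "inj_on (\<lambda>u. {u, w}) {u. {u, w} \<in> E}"
    by (auto simp: inj_on_def doubleton_eq_iff)
  have "(\<lambda>u. {u, w}) ` {u. {u, w} \<in> E} = {e \<in> E. w \<in> e}"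
  proof (intro equalityI subsetI)
    fix e assume e: "e \<in> {e \<in> E. w \<in> e}"
    then have "card e = 2" using G unfolding simple_graph_def by auto
    then obtain a b where "e = {a, b}" by (auto simp: card_2_iff)
    then have "e = {if a = w then b else a, w}" using e by auto
    then show "e \<in> (\<lambda>u. {u, w}) ` {u. {u, w} \<in> E}" using e by (auto intro!: image_eqI)
  qed auto
  then show ?thesis unfolding degree_def using card_image[OF inj] by simp
qed

lemma shortest_walk_card_neighbourhood_ge:
  assumes G: "simple_graph V E" and p: "shortest_walk V E p"
    and W: "W \<subseteq> set p" "\<And>w. w \<in> W \<Longrightarrow> d \<le> degree E w"
  shows "card W * d \<le> 3 * card {u. \<exists>w\<in>W. {u, w} \<in> E}"
proof -
  define N where "N = {u. \<exists>w\<in>W. {u, w} \<in> E}"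
  have finV: "finite V" using G unfolding simple_graph_def by simp
  have NV: "N \<subseteq> V" unfolding N_def using simple_graph_edge_in_V[OF G] by blast
  have finN: "finite N" using NV finV finite_subset by blast
  have finW: "finite W" using W(1) finite_subset by blast
  have finNb: "finite {u. {u, w} \<in> E}" for w
    using simple_graph_edge_in_V[OF G] finV by (auto intro: finite_subset)
  have "card W * d \<le> (\<Sum>w\<in>W. degree E w)"
    using sum_mono[of W "\<lambda>_. d" "degree E"] W(2) by simp
  also have "\<dots> = card (SIGMA w:W. {u. {u, w} \<in> E})"
    using finW finNb by (simp add: simple_graph_card_neighbours[OF G])
  also have "\<dots> \<le> card ((\<lambda>(x, w). (w, x)) ` (SIGMA x:N. {w \<in> W. {x, w} \<in> E}))"
    using finN finW by (intro card_mono) (auto simp: N_def image_iff)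
  also have "\<dots> \<le> card (SIGMA x:N. {w \<in> W. {x, w} \<in> E})"
    using finN finW by (intro card_image_le) auto
  also have "\<dots> = (\<Sum>x\<in>N. card {w \<in> W. {x, w} \<in> E})"
    using finN finW by simp
  also have "\<dots> \<le> (\<Sum>x\<in>N. 3)"
  proof (intro sum_mono)
    fix x assume "x \<in> N"
    have "card {w \<in> W. {x, w} \<in> E} \<le> card {w \<in> set p. {x, w} \<in> E}"
      using W(1) by (intro card_mono) auto
    then show "card {w \<in> W. {x, w} \<in> E} \<le> 3"
      using shortest_walk_card_neighbours_le_3[OF p] \<open>x \<in> N\<close> NV by fastforce
  qed
  finally show ?thesis unfolding N_def by simp
qed

lemma bfs_tree_dist_le:
  assumes T: "bfs_tree V E x T" "T \<subseteq> H" and st: "s \<in> V" "t \<in> V"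
  shows "dist V H s t \<le> dist V E x s + dist V E x t"
proof -
  have "dist V H s t \<le> dist V H s x + dist V H x t" by (rule dist_triangle)
  also have "\<dots> \<le> dist V T s x + dist V T x t"
    using T(2) by (intro add_mono dist_antimono)
  also have "\<dots> = dist V E x s + dist V E x t"
    using T(1) st unfolding bfs_tree_def by (simp add: dist_commute[of V T s x])
  finally show ?thesis .
qed

lemma construction_bfs_tree:
  assumes "construction V E \<pi> S1 S2 H" "x \<in> S1"
  obtains T where "bfs_tree V E x T" "T \<subseteq> H"
  using assms unfolding construction_def by blast

lemma construction_dist_le_if_neighbour_sampled:
  assumes cs: "canonical_sp V E \<pi>" and st: "s \<in> V" "t \<in> V"
    and H: "construction V E \<pi> S1 S2 H" and x: "x \<in> S1" "x \<in> V"
    and w: "w \<in> set (\<pi> s t)" "{x, w} \<in> E"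
  shows "dist V H s t \<le> dist V E s t + 2"
proof -
  obtain T where T: "bfs_tree V E x T" "T \<subseteq> H" using construction_bfs_tree[OF H x(1)] .
  obtain i where i: "i < length (\<pi> s t)" "w = \<pi> s t ! i" using w(1) by (auto simp: in_set_conv_nth)
  have "dist V H s t \<le> dist V E x s + dist V E x t" using bfs_tree_dist_le[OF T st] .
  also have "\<dots> \<le> dist V E s t + 2"
    using shortest_walk_detour_le[OF canonical_sp_shortest_walk(1)[OF cs st] i(1) x(2)] w(2) i(2)
      canonical_sp_shortest_walk(2,3)[OF cs st] by simp
  finally show ?thesis .
qed

lemma prob_sample_set_disjoint:
  assumes finV: "finite V" and NV: "N \<subseteq> V"
  shows "measure_pmf.prob (sample_set V q) {S. S \<inter> N = {}} = (1 - min 1 (max 0 q)) ^ card N"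
proof -
  define r where "r = min 1 (max 0 q)"
  have r: "0 \<le> r" "r \<le> 1" unfolding r_def by auto
  have pre: "(\<lambda>f. {x \<in> V. f x}) -` {S. S \<inter> N = {}} = Pi V (\<lambda>x. if x \<in> N then {False} else UNIV)"
    using NV by (auto simp: Pi_def)
  have "measure_pmf.prob (sample_set V q) {S. S \<inter> N = {}} =
        measure_pmf.prob (Pi_pmf V False (\<lambda>_. bernoulli_pmf r)) (Pi V (\<lambda>x. if x \<in> N then {False} else UNIV))"
    unfolding sample_set_def measure_map_pmf pre r_def ..
  also have "\<dots> = (\<Prod>x\<in>V. measure_pmf.prob (bernoulli_pmf r) (if x \<in> N then {False} else UNIV))"
    using finV by (rule measure_Pi_pmf_Pi)
  also have "\<dots> = (\<Prod>x\<in>V. if x \<in> N then 1 - r else 1)"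
    by (intro prod.cong) (auto simp: measure_pmf_single r)
  also have "\<dots> = (1 - r) ^ card N"
    using finV NV by (simp add: prod.If_cases Int_absorb1 Int_absorb2)
  finally show ?thesis unfolding r_def .
qed

definition sample1_prob :: "nat \<Rightarrow> real" where
  "sample1_prob n = min 1 (max 0 (9 * real (mu n) / real n))"

lemma prob_samples_ge_if_first_hits:
  assumes finV: "finite V" and NV: "N \<subseteq> V"
    and A: "\<And>S1 S2. S1 \<subseteq> V \<Longrightarrow> S2 \<subseteq> V \<Longrightarrow> S1 \<inter> N \<noteq> {} \<Longrightarrow> (S1, S2) \<in> A"
  shows "measure_pmf.prob (samples V) A
           \<ge> 1 - (1 - sample1_prob (card V)) ^ card N"
proof -
  define q where "q = 9 * real (mu (card V)) / real (card V)"
  define Hit where "Hit = UNIV - {S :: 'a set. S \<inter> N = {}}"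
  have support: "set_pmf (samples V) \<subseteq> {S. S \<subseteq> V} \<times> {S. S \<subseteq> V}"
    unfolding samples_def sample_set_def by auto
  have "(Hit \<times> UNIV) \<inter> set_pmf (samples V) \<subseteq> A \<inter> set_pmf (samples V)"
    using A support unfolding Hit_def by blast
  then have "measure_pmf.prob (samples V) (Hit \<times> UNIV) \<le> measure_pmf.prob (samples V) A"
    by (metis measure_Int_set_pmf measure_pmf.finite_measure_mono sets_measure_pmf UNIV_I)
  moreover have "measure_pmf.prob (samples V) (Hit \<times> UNIV) = measure_pmf.prob (sample_set V q) Hit"
    unfolding samples_def q_def
    by (metis measure_map_pmf map_fst_pair_pmf vimage_fst)
  moreover have "measure_pmf.prob (sample_set V q) Hit = 1 - (1 - min 1 (max 0 q)) ^ card N"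
    using measure_pmf.prob_compl[of "{S. S \<inter> N = {}}" "sample_set V q"]
      prob_sample_set_disjoint[OF finV NV] unfolding Hit_def by simp
  ultimately show ?thesis unfolding q_def sample1_prob_def by simp
qed

lemma mu_pow_5_ge:
  assumes "n \<ge> 2"
  shows "real (mu n) ^ 5 \<ge> real n ^ 2 * ln (real n)"
proof -
  define a where "a = real n powr (2/5) * ln (real n) powr (1/5)"
  have lnpos: "ln (real n) > 0" using assms by simp
  have "a \<le> real (mu n)" unfolding mu_def a_def by linarith
  then have "a ^ 5 \<le> real (mu n) ^ 5" unfolding a_def by (intro power_mono) auto
  moreover have "a ^ 5 = real n ^ 2 * ln (real n)"
  proof -
    have "a ^ 5 = (real n powr (2/5)) ^ 5 * (ln (real n) powr (1/5)) ^ 5"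
      unfolding a_def by (simp add: power_mult_distrib)
    also have "\<dots> = real n powr 2 * ln (real n) powr 1"
      using assms lnpos by (subst powr_power, simp)+ simp
    finally show ?thesis using assms lnpos by simp
  qed
  ultimately show ?thesis by simp
qed

text \<open>Here \<open>k\<close> counts the heavy nodes of \<open>\<pi>(s,t)\<close> and \<open>K\<close> their neighbours.\<close>

lemma miss_probability_le:
  fixes n k K :: nat
  assumes n: "n \<ge> 2" and k: "real (mu n) ^ 3 / real n < real k" and K: "k * mu n \<le> 3 * K"
  shows "(1 - sample1_prob n) ^ K \<le> 1 / real n ^ 3"
proof -
  define m where "m = real (mu n)"
  have npos: "real n > 0" and lnpos: "ln (real n) > 0" using n by auto
  have m5: "m ^ 5 \<ge> real n ^ 2 * ln (real n)" using mu_pow_5_ge[OF n] unfolding m_def .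
  moreover have "real n ^ 2 * ln (real n) > 0" using npos lnpos by simp
  ultimately have mpos: "m > 0" unfolding m_def by (cases "mu n") auto
  have "real (k * mu n) \<le> real (3 * K)" using K by (rule of_nat_mono)
  then have "real K \<ge> real k * m / 3" unfolding m_def by simp
  moreover have "real k * m / 3 > m ^ 4 / (3 * real n)"
    using k mpos npos unfolding m_def by (simp add: field_simps power_def)
  ultimately have K_gt: "real K > m ^ 4 / (3 * real n)" by linarith
  show ?thesis
  proof (cases "9 * m / real n \<ge> 1")
    case True
    have "m ^ 4 / (3 * real n) \<ge> 0" using mpos npos by simp
    then have "K > 0" using K_gt by linarith
    then show ?thesis using True unfolding m_def sample1_prob_def by (simp add: zero_power)
  next
    case False
    define r where "r = 9 * m / real n"
    have r: "0 \<le> r" "r < 1" using False mpos npos unfolding r_def by auto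
    have "(1 - r) ^ K \<le> exp (- r) ^ K"
      using r exp_ge_add_one_self[of "- r"] by (intro power_mono) auto
    also have "\<dots> = exp (- (r * real K))" by (simp add: exp_of_nat_mult[symmetric] mult.commute)
    also have "\<dots> \<le> exp (- (3 * ln (real n)))"
    proof -
      have "r * real K \<ge> r * (m ^ 4 / (3 * real n))" using K_gt r by (intro mult_left_mono) auto
      also have "r * (m ^ 4 / (3 * real n)) = 3 * m ^ 5 / real n ^ 2"
        unfolding r_def using npos by (simp add: field_simps power_def)
      also have "3 * m ^ 5 / real n ^ 2 \<ge> 3 * ln (real n)"
        using m5 npos by (simp add: field_simps)
      finally show ?thesis by simp
    qed
    also have "\<dots> = 1 / real n ^ 3"
    proof -
      have "3 * ln (real n) = ln (real n ^ 3)" using npos by (simp add: ln_realpow)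
      then show ?thesis using npos by (simp add: exp_minus inverse_eq_divide)
    qed
    finally show ?thesis using r unfolding r_def m_def sample1_prob_def by simp
  qed
qed

theorem lemma6:
  fixes V :: "'a set" and E :: "'a set set" and \<pi> :: "'a \<Rightarrow> 'a \<Rightarrow> 'a list"
    and Hc :: "'a set \<Rightarrow> 'a set \<Rightarrow> 'a set set" and s t :: 'a
  assumes "simple_graph V E"
    and "connected_graph V E"
    and "canonical_sp V E \<pi>"
    and "\<forall>S1 S2. S1 \<subseteq> V \<and> S2 \<subseteq> V \<longrightarrow> construction V E \<pi> S1 S2 (Hc S1 S2)"
    and "s \<in> V" and "t \<in> V"
    and "real (card {v \<in> set (\<pi> s t). heavy V E v}) > real (mu (card V)) ^ 3 / real (card V)"
  shows "measure_pmf.prob (samples V)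
           {(S1, S2). uncovered E (Hc S1 S2) s \<and> uncovered E (Hc S1 S2) t \<longrightarrow>
                      dist V (Hc S1 S2) s t \<le> dist V E s t + 4}
         \<ge> 1 - 1 / real (card V) ^ 3"
proof (cases "card V \<ge> 2")
  case True
  note G = assms(1) and cs = assms(3) and st = assms(5,6)
  define W where "W = {v \<in> set (\<pi> s t). heavy V E v}"
  define N where "N = {u. \<exists>w\<in>W. {u, w} \<in> E}"
  have finV: "finite V" and NV: "N \<subseteq> V"
    using G simple_graph_edge_in_V[OF G] unfolding simple_graph_def N_def by blast+
  have "card W * mu (card V) \<le> 3 * card N"
    unfolding N_def using canonical_sp_shortest_walk(1)[OF cs st]
    by (rule shortest_walk_card_neighbourhood_ge[OF G]) (auto simp: W_def heavy_def)
  then have miss: "(1 - sample1_prob (card V)) ^ card N \<le> 1 / real (card V) ^ 3"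
    using miss_probability_le True assms(7) unfolding W_def by blast
  have "dist V (Hc S1 S2) s t \<le> dist V E s t + 4"
    if S: "S1 \<subseteq> V" "S2 \<subseteq> V" and hit: "S1 \<inter> N \<noteq> {}" for S1 S2
  proof -
    obtain x w where "x \<in> S1" "x \<in> N" "w \<in> W" "{x, w} \<in> E" using hit unfolding N_def by blast
    then have "dist V (Hc S1 S2) s t \<le> dist V E s t + 2"
      using construction_dist_le_if_neighbour_sampled[OF cs st] assms(4) S NV unfolding W_def by blast
    also have "\<dots> \<le> dist V E s t + 4" by (simp add: numeral_eq_enat add_left_mono)
    finally show ?thesis .
  qed
  then show ?thesis
    by (intro order.trans[OF _ prob_samples_ge_if_first_hits[OF finV NV]]) (use miss in auto)
next
  case False
  then have "card V = 1" using assms(5,6) card_0_eq assms(1) unfolding simple_graph_def by fastforce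
  then show ?thesis by simp
qed

end
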